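(* Let $(\Omega,\mathcal G,\alpha)$ be a dynamical system and let $\omega\in\Omega$ be a non-isolated point whose orbit $\{\alpha(g)(\omega):g\in\mathcal G\}$ is dense in $\Omega$. Then $\omega$ is pseudoergodic.
   Context: $(\mathcal G,+)$ is a countable discrete group (written additively, not necessarily abelian). A dynamical system $(\Omega,\mathcal G,\alpha)$ consists of a compact metric space $\Omega$ and a map $\alpha$ from $\mathcal G$ to the homeomorphisms of $\Omega$ with $\alpha(g+h)=\alpha(g)\circ\alpha(h)$. A sequence $(g_n)$ satisfies $g_n\to\infty$ if it eventually leaves every finite subset of $\mathcal G$. $L(\omega)=\{\nu\in\Omega:\exists (g_n),\ g_n\to\infty,\ \alpha(g_n)(\omega)\to\nu\}$; $\omega$ is pseudoergodic if $L(\omega)=\Omega$. *)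

theory Defs
  imports "HOL-Analysis.Analysis"
begin

definition dynamical_system ::
  "'m::metric_space set \<Rightarrow> ('g::{group_add,countable} \<Rightarrow> 'm \<Rightarrow> 'm) \<Rightarrow> bool" where
  "dynamical_system \<Omega> \<alpha> \<longleftrightarrow>
     compact \<Omega> \<and>
     (\<forall>g. \<exists>h. homeomorphism \<Omega> \<Omega> (\<alpha> g) h) \<and>
     (\<forall>g h. \<forall>x\<in>\<Omega>. \<alpha> (g + h) x = \<alpha> g (\<alpha> h x))"

definition tends_to_infinity :: "(nat \<Rightarrow> 'g) \<Rightarrow> bool" where
  "tends_to_infinity s \<longleftrightarrow> (\<forall>F. finite F \<longrightarrow> (\<forall>\<^sub>F n in sequentially. s n \<notin> F))"

definition limit_set ::
  "'m::metric_space set \<Rightarrow> ('g \<Rightarrow> 'm \<Rightarrow> 'm) \<Rightarrow> 'm \<Rightarrow> 'm set" where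
  "limit_set \<Omega> \<alpha> \<omega> = {\<nu>\<in>\<Omega>. \<exists>s. tends_to_infinity s \<and> (\<lambda>n. \<alpha> (s n) \<omega>) \<longlonglongrightarrow> \<nu>}"

definition pseudoergodic ::
  "'m::metric_space set \<Rightarrow> ('g \<Rightarrow> 'm \<Rightarrow> 'm) \<Rightarrow> 'm \<Rightarrow> bool" where
  "pseudoergodic \<Omega> \<alpha> \<omega> \<longleftrightarrow> limit_set \<Omega> \<alpha> \<omega> = \<Omega>"

end

theory Submission
  imports Defs
begin

text \<open>Translating \<omega> by \<alpha> g is a homeomorphism of \<Omega>, so every orbit point is non-isolated;
  the non-isolated points form a closed set containing the dense orbit, hence all of \<Omega>.
  A point \<nu> that is a limit point of \<Omega> is then a limit point of the orbit, even after
  deleting the orbit points of any finite set of group elements; exhausting the countable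
  group by finite sets yields group elements tending to infinity whose orbit points converge
  to \<nu>.\<close>

lemma homeomorphism_islimpt:
  assumes "homeomorphism S T f g" "x \<in> S" "x islimpt S"
  shows "f x islimpt T"
proof -
  have "f -` (T - {f x}) \<inter> S = S - {x}"
    using assms(1,2) by (auto simp: homeomorphism_def) metis+
  moreover have "continuous_on S f"
    using assms(1) by (simp add: homeomorphism_def)
  ultimately have "f x islimpt T - {f x}"
    using assms(2,3) islimpt_punctured by (intro islimpt_image[of x f _ S]) auto
  then show ?thesis
    by (rule islimpt_subset) auto
qed

lemma islimpt_if_dense_in_limpts:
  fixes A :: "'a::metric_space set"
  assumes "closure A = S" "\<And>a. a \<in> A \<Longrightarrow> a islimpt S" "x \<in> S"
  shows "x islimpt S"
proof -
  have "S \<subseteq> {y. y islimpt S}"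
    using assms(1,2) by (metis closure_minimal closed_limpts mem_Collect_eq subsetI)
  with assms(3) show ?thesis by blast
qed

lemma tends_to_infinity_if_to_nat_ge:
  fixes s :: "nat \<Rightarrow> 'g::countable"
  assumes "\<And>n. to_nat (s n) \<ge> n"
  shows "tends_to_infinity s"
  unfolding tends_to_infinity_def
proof (intro allI impI)
  fix F :: "'g set" assume "finite F"
  then obtain N where N: "\<And>g. g \<in> F \<Longrightarrow> to_nat g < N"
    using finite_nat_bounded[of "to_nat ` F"] by auto
  have "s n \<notin> F" if "n \<ge> N" for n
    using N[of "s n"] assms[of n] that by linarith
  then show "\<forall>\<^sub>F n in sequentially. s n \<notin> F"
    by (rule eventually_sequentiallyI)
qed

lemma LIMSEQ_if_dist_less_inverse:
  fixes X :: "nat \<Rightarrow> 'a::metric_space"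
  assumes "\<And>n. dist (X n) l < 1 / Suc n"
  shows "X \<longlonglongrightarrow> l"
proof (rule metric_LIMSEQ_I)
  fix r :: real assume "r > 0"
  then obtain N where N: "1 / Suc N < r"
    by (metis nat_approx_posE)
  have "dist (X n) l < r" if "n \<ge> N" for n
  proof -
    have "1 / real (Suc n) \<le> 1 / Suc N"
      using that by (simp add: frac_le)
    then show ?thesis using assms[of n] N by linarith
  qed
  then show "\<exists>N. \<forall>n\<ge>N. dist (X n) l < r" by blast
qed

lemma limit_along_tends_to_infinity:
  fixes f :: "'g::countable \<Rightarrow> 'a::metric_space"
  assumes "\<And>F. finite F \<Longrightarrow> l \<in> closure (f ` (- F))"
  shows "\<exists>s. tends_to_infinity s \<and> (\<lambda>n. f (s n)) \<longlonglongrightarrow> l"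
proof -
  have "\<exists>g. to_nat g \<ge> n \<and> dist (f g) l < 1 / Suc n" for n
  proof -
    have "finite (to_nat -` {..<n} :: 'g set)"
      by (rule finite_vimageI) auto
    then have "l \<in> closure (f ` (- (to_nat -` {..<n})))"
      by (rule assms)
    then obtain y where "y \<in> f ` (- (to_nat -` {..<n}))" "dist y l < 1 / Suc n"
      by (metis closure_approachable of_nat_0_less_iff zero_less_Suc zero_less_divide_1_iff)
    then obtain g where "\<not> to_nat g < n" "dist (f g) l < 1 / Suc n"
      by blast
    then show ?thesis by (metis not_less)
  qed
  then obtain s where "\<And>n. to_nat (s n) \<ge> n" "\<And>n. dist (f (s n)) l < 1 / Suc n"
    by metis
  then show ?thesis
    by (metis tends_to_infinity_if_to_nat_ge LIMSEQ_if_dist_less_inverse)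
qed

lemma islimpt_image_Compl_finite:
  fixes f :: "'a \<Rightarrow> 'b::t1_space"
  assumes "x islimpt range f" "finite F"
  shows "x islimpt f ` (- F)"
proof -
  have "range f = f ` F \<union> f ` (- F)" by auto
  with assms show ?thesis
    by (metis finite_imageI islimpt_Un_finite)
qed

theorem lemma3p5:
  fixes \<Omega> :: "'m::metric_space set"
    and \<alpha> :: "'g::{group_add,countable} \<Rightarrow> 'm \<Rightarrow> 'm"
    and \<omega> :: 'm
  assumes "dynamical_system \<Omega> \<alpha>"
    and "\<omega> \<in> \<Omega>"
    and "\<omega> islimpt \<Omega>"
    and "closure (range (\<lambda>g. \<alpha> g \<omega>)) = \<Omega>"
  shows "pseudoergodic \<Omega> \<alpha> \<omega>"
proof -
  have orbit_limpt: "\<alpha> g \<omega> islimpt \<Omega>" for g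
    using assms(1-3) homeomorphism_islimpt unfolding dynamical_system_def by metis
  have "\<nu> \<in> limit_set \<Omega> \<alpha> \<omega>" if "\<nu> \<in> \<Omega>" for \<nu>
  proof -
    have "\<nu> islimpt \<Omega>"
      using islimpt_if_dense_in_limpts[OF assms(4)] orbit_limpt that by blast
    then have "\<nu> islimpt range (\<lambda>g. \<alpha> g \<omega>)"
      using assms(4) limpt_of_closure by metis
    then have "\<nu> \<in> closure ((\<lambda>g. \<alpha> g \<omega>) ` (- F))" if "finite F" for F
      unfolding closure_def using islimpt_image_Compl_finite[OF _ that] by blast
    then show ?thesis
      using limit_along_tends_to_infinity \<open>\<nu> \<in> \<Omega>\<close> unfolding limit_set_def by blast
  qed
  then show ?thesis
    unfolding pseudoergodic_def limit_set_def by auto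
qed

end
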